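(* Assume $\sqrt{\sigma_1(M\Sigma^{1/2})}<\frac1{16}$ and set $\varepsilon_1=\frac{1}{2\sqrt{\|\Sigma\|_{\mathrm{op}}}}\left(\frac1{16}-\sqrt{\sigma_1(M\Sigma^{1/2})}\right)$. Let $\theta=(A,B)$ be $\varepsilon_1$-close (in $P$-norm) to $\mathcal{S}$. Then, for $x_1\sim\mathcal{N}(0,\Sigma)$, $$\mathbb{E}\left[\exp(8x_1^{\top}Bx_1)\right]<\infty,\qquad \mathbb{E}\left[\exp(16x_1^{\top}B\Sigma B^{\top}x_1)\right]<\infty.$$
   Context: $\Sigma\in\mathbb{R}^{d\times d}$ positive definite, $M\in\mathbb{R}^{p\times d}$ with $p\ge d$ and $M\Sigma^{1/2}$ of full column rank; $A\in\mathbb{R}^{p\times d}$, $B\in\mathbb{R}^{d\times d}$. With $U\Gamma V^{\top}$ an SVD of $M\Sigma^{1/2}$ ($U^{\top}U=V^{\top}V=I_d$, $\Gamma$ diagonal positive definite), $\mathcal{S}=\{(U\Gamma^{1/2}J^{\top}\Sigma^{-1/2};\ \Sigma^{-1/2}V\Gamma^{1/2}J^{\top}\Sigma^{-1/2}):J\in\mathbb{O}_d\}$. $P=\mathrm{diag}(I_p,\Sigma)$, $\|\theta\|_P=\sqrt{\mathrm{Tr}(\theta^{\top}P\theta)}$. *)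

theory Defs
  imports "HOL-Analysis.Analysis" "HOL-Probability.Probability"
begin

definition sym_mat :: "real^'n^'n \<Rightarrow> bool" where
  "sym_mat S \<longleftrightarrow> transpose S = S"

definition pos_def_mat :: "real^'n^'n \<Rightarrow> bool" where
  "pos_def_mat S \<longleftrightarrow> sym_mat S \<and> (\<forall>x. x \<noteq> 0 \<longrightarrow> x \<bullet> (S *v x) > 0)"

definition pos_semidef_mat :: "real^'n^'n \<Rightarrow> bool" where
  "pos_semidef_mat S \<longleftrightarrow> sym_mat S \<and> (\<forall>x. x \<bullet> (S *v x) \<ge> 0)"

definition mat_sqrt :: "real^'n^'n \<Rightarrow> real^'n^'n" where
  "mat_sqrt S = (THE R. pos_semidef_mat R \<and> R ** R = S)"

definition singular_values :: "real^'n^'m \<Rightarrow> real set" where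
  "singular_values A = {s. s \<ge> 0 \<and> (\<exists>v. v \<noteq> 0 \<and> (transpose A ** A) *v v = (s^2) *\<^sub>R v)}"

definition sigma1 :: "real^'n^'m \<Rightarrow> real" where
  "sigma1 A = Max (singular_values A)"

definition op_norm :: "real^'n^'m \<Rightarrow> real" where
  "op_norm A = onorm (\<lambda>x. A *v x)"

text \<open>P-norm of theta = (A;B) with P = diag(I_p, Sigma):
  sqrt (Tr (theta^T P theta)) = sqrt (Tr (A^T A) + Tr (B^T Sigma B)).\<close>
definition P_norm :: "real^'d^'d \<Rightarrow> real^'d^'p \<Rightarrow> real^'d^'d \<Rightarrow> real" where
  "P_norm Sig A B = sqrt (trace (transpose A ** A) + trace (transpose B ** Sig ** B))"

text \<open>The solution set S, for a fixed SVD  M Sigma^(1/2) = U Gamma V^T.\<close>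
definition sol_set :: "real^'d^'d \<Rightarrow> real^'d^'p \<Rightarrow> real^'d^'d \<Rightarrow> real^'d^'d
     \<Rightarrow> ((real^'d^'p) \<times> (real^'d^'d)) set" where
  "sol_set Sig U Gam V =
     {(U ** mat_sqrt Gam ** transpose J ** matrix_inv (mat_sqrt Sig),
       matrix_inv (mat_sqrt Sig) ** V ** mat_sqrt Gam ** transpose J ** matrix_inv (mat_sqrt Sig))
      | J. orthogonal_matrix J}"

definition P_dist :: "real^'d^'d \<Rightarrow> real^'d^'p \<Rightarrow> real^'d^'d
     \<Rightarrow> ((real^'d^'p) \<times> (real^'d^'d)) set \<Rightarrow> real" where
  "P_dist Sig A B S = (INF s\<in>S. P_norm Sig (A - fst s) (B - snd s))"

definition mvn_density :: "real^'d^'d \<Rightarrow> real^'d \<Rightarrow> real" where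
  "mvn_density Sig x =
     exp (- (x \<bullet> (matrix_inv Sig *v x)) / 2) / sqrt ((2 * pi) ^ CARD('d) * det Sig)"

end

theory Submission
  imports Defs
begin

text \<open>
  Put R = Sigma^(1/2) and y = R^-1 x. The Gaussian density is proportional to exp(-|y|^2/2),
  while x'Bx = y'(RBR)y and x'B Sigma B'x = |(RBR)'y|^2. At a point B_J of the solution set,
  R B_J R = V Gamma^(1/2) J' has operator norm sqrt(sigma_1(M Sigma^(1/2))); the P-norm bounds the
  Frobenius norm of R(B - B_J), hence the operator norm of R(B - B_J)R up to the factor
  ||Sigma||^(1/2). So eps_1-closeness gives ||RBR|| <= c < 1/16, both exponents stay below
  (1/2 - eta)|y|^2, and the moments are dominated by a Gaussian integral. The square root
  Sigma^(1/2), defined by a definite description, exists and is unique by the spectral theorem,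
  obtained by maximising the Rayleigh quotient on invariant subspaces.
\<close>

declare transpose_matrix_vector [simp del]

lemma inner_matrix_vector_transpose:
  "((A::real^'n^'m) *v x) \<bullet> y = x \<bullet> (transpose A *v y)"
  by (metis dot_lmul_matrix inner_commute transpose_matrix_vector)

lemma sym_mat_inner: "sym_mat S \<Longrightarrow> (S *v x) \<bullet> y = x \<bullet> (S *v y)"
  by (metis inner_matrix_vector_transpose sym_mat_def)

lemma sym_mat_iff_inner:
  "sym_mat (S::real^'n^'n) \<longleftrightarrow> (\<forall>x y. (S *v x) \<bullet> y = x \<bullet> (S *v y))"
proof
  assume S: "\<forall>x y. (S *v x) \<bullet> y = x \<bullet> (S *v y)"
  have "(transpose S *v x - S *v x) \<bullet> y = 0" for x y
    using S[rule_format, of y x] inner_matrix_vector_transpose[of "transpose S" x y]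
    by (simp add: inner_diff_left inner_diff_right inner_commute)
  then have "transpose S *v x = S *v x" for x
    by (metis inner_eq_zero_iff right_minus_eq)
  then show "sym_mat S"
    by (simp add: sym_mat_def matrix_eq)
qed (simp add: sym_mat_inner)

lemma pos_semidef_mat_mult_self:
  assumes "sym_mat R" shows "pos_semidef_mat (R ** R)"
  unfolding pos_semidef_mat_def
proof (intro conjI allI)
  show "sym_mat (R ** R)"
    using assms by (simp add: sym_mat_def matrix_transpose_mul)
  show "0 \<le> x \<bullet> ((R ** R) *v x)" for x
    using sym_mat_inner[OF assms, of x "R *v x"]
    by (simp add: matrix_vector_mul_assoc[symmetric]) (metis inner_ge_zero)
qed

lemma norm_orthogonal_matrix_vector:
  assumes "orthogonal_matrix (Q::real^'n^'n)" shows "norm (Q *v x) = norm x"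
proof -
  have "orthogonal_transformation ((*v) Q)"
    using assms by (simp add: orthogonal_transformation_matrix)
  then show ?thesis
    by (rule orthogonal_transformation_norm)
qed

lemma norm_matrix_vector_le: "norm ((A::real^'n^'m) *v x) \<le> norm A * norm x"
proof -
  have "norm (A *v x) = L2_set (\<lambda>k. \<bar>A $ k \<bullet> x\<bar>) UNIV"
    unfolding norm_vec_def[of "A *v x"] by (simp add: matrix_mult_dot)
  also have "\<dots> \<le> L2_set (\<lambda>k. norm (A $ k) * norm x) UNIV"
    by (intro L2_set_mono Cauchy_Schwarz_ineq2) simp
  also have "\<dots> = norm A * norm x"
    unfolding norm_vec_def[of A] by (simp add: L2_set_left_distrib)
  finally show ?thesis .
qed

lemma trace_transpose_mult_self: "trace (transpose (M::real^'n^'m) ** M) = norm M ^ 2"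
proof -
  have "trace (transpose M ** M) = (\<Sum>i\<in>UNIV. \<Sum>k\<in>UNIV. M$k$i * M$k$i)"
    by (simp add: trace_def matrix_matrix_mult_def transpose_def)
  also have "\<dots> = (\<Sum>k\<in>UNIV. \<Sum>i\<in>UNIV. M$k$i * M$k$i)"
    by (rule sum.swap)
  also have "\<dots> = norm M ^ 2"
    by (simp add: power2_norm_eq_inner inner_vec_def)
  finally show ?thesis .
qed

lemma norm_transpose_matrix_vector_le:
  assumes "\<And>z. norm ((C::real^'n^'m) *v z) \<le> c * norm z"
  shows "norm (transpose C *v y) \<le> c * norm y"
proof -
  have "norm (transpose C *v y) ^ 2 = (C *v (transpose C *v y)) \<bullet> y"
    by (simp add: power2_norm_eq_inner inner_matrix_vector_transpose)
  also have "\<dots> \<le> norm (C *v (transpose C *v y)) * norm y"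
    by (rule norm_cauchy_schwarz)
  also have "\<dots> \<le> c * norm (transpose C *v y) * norm y"
    by (rule mult_right_mono[OF assms]) simp
  finally have "norm (transpose C *v y) * norm (transpose C *v y) \<le> (c * norm y) * norm (transpose C *v y)"
    by (simp add: power2_eq_square mult_ac)
  moreover have "0 \<le> c"
    using assms[of "axis undefined 1"] by (simp add: norm_axis_1) (meson norm_ge_zero order_trans)
  ultimately show ?thesis
    by (cases "transpose C *v y = 0") (simp_all add: mult_le_cancel_right)
qed

section \<open>Symmetric matrices: the spectral theorem\<close>

lemma linear_le_quadratic_imp_zero:
  fixes a b :: real
  assumes "\<And>t. 2 * t * a \<le> t\<^sup>2 * b"
  shows "a = 0"
proof -
  define k where "k = \<bar>b\<bar> + 1"
  have k: "k > 0" by (simp add: k_def add_nonneg_pos)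
  have "2 * (a / k) * a \<le> (a / k)\<^sup>2 * b" by (rule assms)
  then have "2 * a\<^sup>2 * k \<le> a\<^sup>2 * b"
    using k by (simp add: field_simps power2_eq_square)
  also have "\<dots> \<le> a\<^sup>2 * \<bar>b\<bar>"
    by (simp add: mult_left_mono)
  finally have "a\<^sup>2 * (\<bar>b\<bar> + 2) \<le> 0"
    by (simp add: k_def algebra_simps)
  then show ?thesis
    by (simp add: mult_le_0_iff) (smt (verit) abs_ge_zero)
qed

lemma rayleigh_maximizer_is_eigenvector:
  fixes S :: "real^'n^'n"
  assumes S: "sym_mat S" and W: "subspace W" and inv: "\<And>w. w \<in> W \<Longrightarrow> S *v w \<in> W"
    and v: "v \<in> W" and le: "\<And>x. x \<in> W \<Longrightarrow> x \<bullet> (S *v x) \<le> l * (x \<bullet> x)"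
    and eq: "v \<bullet> (S *v v) = l * (v \<bullet> v)"
  shows "S *v v = l *\<^sub>R v"
proof -
  define u where "u = S *v v - l *\<^sub>R v"
  have u: "u \<in> W"
    unfolding u_def using W v inv by (simp add: subspace_diff subspace_scale)
  have Suv: "u \<bullet> (S *v v) = u \<bullet> u + l * (u \<bullet> v)"
    by (simp add: u_def inner_diff_right algebra_simps)
  have "2 * t * (u \<bullet> u) \<le> t\<^sup>2 * (l * (u \<bullet> u) - u \<bullet> (S *v u))" for t
  proof -
    have "v + t *\<^sub>R u \<in> W"
      using W u v by (simp add: subspace_add subspace_scale)
    from le[OF this] have
      "v \<bullet> (S *v v) + 2 * t * (u \<bullet> (S *v v)) + t\<^sup>2 * (u \<bullet> (S *v u))
        \<le> l * (v \<bullet> v) + 2 * t * l * (u \<bullet> v) + t\<^sup>2 * l * (u \<bullet> u)"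
      using sym_mat_inner[OF S, of u v]
      by (simp add: matrix_vector_right_distrib matrix_vector_mult_scaleR inner_add_left
          inner_add_right inner_commute power2_eq_square algebra_simps)
    then show ?thesis
      unfolding eq Suv by (simp add: algebra_simps)
  qed
  then have "u \<bullet> u = 0"
    by (rule linear_le_quadratic_imp_zero)
  then show ?thesis
    by (simp add: u_def)
qed

lemma subspace_rayleigh_maximizer:
  fixes S :: "real^'n^'n"
  assumes W: "subspace W" and w: "w \<in> W" "w \<noteq> 0"
  obtains v where "v \<in> W" "norm v = 1" "\<And>x. x \<in> W \<Longrightarrow> x \<bullet> (S *v x) \<le> (v \<bullet> (S *v v)) * (x \<bullet> x)"
proof -
  define K where "K = W \<inter> sphere 0 1"
  have "compact K"
    unfolding K_def Int_commute[of W]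
    by (rule compact_Int_closed[OF compact_sphere closed_subspace[OF W]])
  moreover have "w /\<^sub>R norm w \<in> K"
    using W w by (simp add: K_def subspace_scale)
  moreover have "continuous_on K (\<lambda>x. x \<bullet> (S *v x))"
    by (intro continuous_intros)
  ultimately obtain v where v: "v \<in> K" and max: "\<And>y. y \<in> K \<Longrightarrow> y \<bullet> (S *v y) \<le> v \<bullet> (S *v v)"
    using continuous_attains_sup[of K] by blast
  have "x \<bullet> (S *v x) \<le> (v \<bullet> (S *v v)) * (x \<bullet> x)" if x: "x \<in> W" for x
  proof (cases "x = 0")
    case False
    then have "x /\<^sub>R norm x \<in> K"
      using W x by (simp add: K_def subspace_scale)
    from max[OF this] show ?thesis
      using False by (simp add: matrix_vector_mult_scaleR divide_simps power2_norm_eq_inner[symmetric]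
          power2_eq_square mult_ac)
  qed simp
  moreover have "v \<in> W" "norm v = 1"
    using v by (auto simp: K_def)
  ultimately show ?thesis
    using that by blast
qed

lemma sym_mat_orthogonal_complement_invariant:
  fixes S :: "real^'n^'n"
  assumes S: "sym_mat S" and W: "\<And>w. w \<in> W \<Longrightarrow> S *v w \<in> W" and v: "S *v v = l *\<^sub>R v"
    and x: "x \<in> W" "orthogonal v x"
  shows "S *v x \<in> W" "orthogonal v (S *v x)"
proof -
  have "v \<bullet> (S *v x) = l * (v \<bullet> x)"
    by (metis sym_mat_inner[OF S] v inner_scaleR_left)
  then show "S *v x \<in> W" "orthogonal v (S *v x)"
    using W x by (simp_all add: orthogonal_def)
qed

lemma invariant_subspace_orthonormal_eigenbasis:
  fixes S :: "real^'n^'n"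
  assumes S: "sym_mat S"
  shows "subspace W \<Longrightarrow> (\<And>w. w \<in> W \<Longrightarrow> S *v w \<in> W) \<Longrightarrow>
    \<exists>B\<subseteq>W. pairwise orthogonal B \<and> (\<forall>b\<in>B. norm b = 1 \<and> S *v b = (b \<bullet> (S *v b)) *\<^sub>R b)
      \<and> W \<subseteq> span B"
proof (induction "dim W" arbitrary: W rule: less_induct)
  case less
  show ?case
  proof (cases "W \<subseteq> {0}")
    case True
    then show ?thesis by (intro exI[of _ "{}"]) auto
  next
    case False
    then obtain w where "w \<in> W" "w \<noteq> 0" by auto
    then obtain v where v: "v \<in> W" "norm v = 1"
      and max: "\<And>x. x \<in> W \<Longrightarrow> x \<bullet> (S *v x) \<le> (v \<bullet> (S *v v)) * (x \<bullet> x)"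
      using subspace_rayleigh_maximizer[OF less.prems(1)] by metis
    have vv: "v \<bullet> v = 1"
      using v(2) by (simp add: norm_eq_1)
    have eig: "S *v v = (v \<bullet> (S *v v)) *\<^sub>R v"
      using rayleigh_maximizer_is_eigenvector[OF S less.prems v(1) max] vv by simp
    define W' where "W' = W \<inter> {x. orthogonal v x}"
    have W': "subspace W'"
      unfolding W'_def by (intro subspace_inter less.prems(1) subspace_orthogonal_to_vector)
    have inv': "S *v x \<in> W'" if "x \<in> W'" for x
      using that sym_mat_orthogonal_complement_invariant[OF S less.prems(2) eig]
      by (simp add: W'_def)
    have "v \<notin> W'"
      using vv by (simp add: W'_def orthogonal_def)
    then have "W' \<subset> W"
      using v(1) by (auto simp: W'_def)
    then have "dim W' < dim W"
      using W' less.prems(1) by (intro dim_psubset) (simp add: span_eq_iff[THEN iffD2])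
    from less.hyps[OF this W' inv'] obtain B where
      B: "B \<subseteq> W'" "pairwise orthogonal B"
         "\<forall>b\<in>B. norm b = 1 \<and> S *v b = (b \<bullet> (S *v b)) *\<^sub>R b" "W' \<subseteq> span B"
      by blast
    have "W \<subseteq> span (insert v B)"
    proof
      fix x assume "x \<in> W"
      then have "x - (v \<bullet> x) *\<^sub>R v \<in> W'"
        using v(1) vv less.prems(1)
        by (simp add: W'_def orthogonal_def subspace_diff subspace_scale inner_diff_right)
      then show "x \<in> span (insert v B)"
        using B(4) by (auto simp: span_breakdown_eq)
    qed
    moreover have "pairwise orthogonal (insert v B)"
      using B(1,2) by (intro pairwise_orthogonal_insert) (auto simp: W'_def)
    ultimately show ?thesis
      using B(1,3) v eig by (intro exI[of _ "insert v B"]) (auto simp: W'_def)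
  qed
qed

lemma sym_mat_orthonormal_eigenbasis:
  fixes S :: "real^'n^'n"
  assumes "sym_mat S"
  obtains B where "pairwise orthogonal B" "\<And>b. b \<in> B \<Longrightarrow> norm b = 1"
    "\<And>b. b \<in> B \<Longrightarrow> S *v b = (b \<bullet> (S *v b)) *\<^sub>R b" "span B = UNIV"
  using invariant_subspace_orthonormal_eigenbasis[OF assms subspace_UNIV] that
  by (metis UNIV_I span_UNIV span_mono subset_antisym top_greatest)

section \<open>Square roots of positive semidefinite matrices\<close>

lemma orthonormal_inner:
  assumes "pairwise orthogonal B" "\<And>b. b \<in> B \<Longrightarrow> norm b = 1" "b \<in> B" "b' \<in> B"
  shows "b \<bullet> b' = (if b = b' then 1 else 0)"
  using assms by (auto simp: pairwise_def orthogonal_def norm_eq_1)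

lemma pos_semidef_mat_of_eigenpairs:
  fixes B :: "(real^'n) set"
  assumes orth: "pairwise orthogonal B" and unit: "\<And>b. b \<in> B \<Longrightarrow> norm b = 1"
    and c: "\<And>b. 0 \<le> c b"
  obtains R where "pos_semidef_mat R" "\<And>b. b \<in> B \<Longrightarrow> R *v b = c b *\<^sub>R b"
proof -
  have fin: "finite B"
    using orth by (rule pairwise_orthogonal_imp_finite)
  have \<delta>: "b \<bullet> b' = (if b = b' then 1 else 0)" if "b \<in> B" "b' \<in> B" for b b'
    using orth unit that by (rule orthonormal_inner)
  define f where "f x = (\<Sum>b\<in>B. (c b * (b \<bullet> x)) *\<^sub>R b)" for x
  have "linear f"
  proof (rule linearI)
    show "f (x + y) = f x + f y" for x y
      by (simp add: f_def inner_add_right distrib_left scaleR_add_left sum.distrib)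
    show "f (r *\<^sub>R x) = r *\<^sub>R f x" for r x
      by (simp add: f_def scaleR_sum_right mult.left_commute)
  qed
  define R where "R = matrix f"
  have R: "R *v x = (\<Sum>b\<in>B. (c b * (b \<bullet> x)) *\<^sub>R b)" for x
    unfolding R_def matrix_vector_mul(2)[OF \<open>linear f\<close>] f_def ..
  have Rb: "R *v b = c b *\<^sub>R b" if b: "b \<in> B" for b
  proof -
    have "R *v b = (\<Sum>b'\<in>B. if b' = b then c b' *\<^sub>R b' else 0)"
      unfolding R using b by (intro sum.cong) (auto simp: \<delta>)
    then show ?thesis
      using fin b by (simp add: sum.delta')
  qed
  have inner: "(R *v x) \<bullet> y = (\<Sum>b\<in>B. c b * (b \<bullet> x) * (b \<bullet> y))" for x y
    unfolding R inner_sum_left by (simp add: inner_commute)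
  have "pos_semidef_mat R"
    unfolding pos_semidef_mat_def sym_mat_iff_inner
  proof (intro conjI allI)
    show "(R *v x) \<bullet> y = x \<bullet> (R *v y)" for x y
      by (simp add: inner_commute[of x] inner mult_ac)
    show "0 \<le> x \<bullet> (R *v x)" for x
      using c by (simp add: inner_commute[of x] inner mult.assoc sum_nonneg)
  qed
  then show ?thesis
    using Rb by (rule that)
qed

lemma pos_semidef_mat_sqrt_exists:
  fixes S :: "real^'n^'n"
  assumes S: "pos_semidef_mat S"
  obtains R where "pos_semidef_mat R" "R ** R = S"
proof -
  obtain B where orth: "pairwise orthogonal B" and unit: "\<And>b. b \<in> B \<Longrightarrow> norm b = 1"
    and eig: "\<And>b. b \<in> B \<Longrightarrow> S *v b = (b \<bullet> (S *v b)) *\<^sub>R b" and span: "span B = UNIV"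
    using sym_mat_orthonormal_eigenbasis S unfolding pos_semidef_mat_def by metis
  define c where "c b = sqrt (b \<bullet> (S *v b))" for b
  have c: "c b \<ge> 0" "c b * c b = b \<bullet> (S *v b)" for b
    using S by (simp_all add: c_def pos_semidef_mat_def)
  obtain R where R: "pos_semidef_mat R" and Rb: "\<And>b. b \<in> B \<Longrightarrow> R *v b = c b *\<^sub>R b"
    using pos_semidef_mat_of_eigenpairs[where c = c, OF orth unit c(1)] by metis
  have "(R ** R) *v x = S *v x" for x
  proof (rule linear_eq_on_span[of "(*v) (R ** R)" "(*v) S" B])
    fix b assume b: "b \<in> B"
    have "(R ** R) *v b = (c b * c b) *\<^sub>R b"
      using b by (simp add: matrix_vector_mul_assoc[symmetric] Rb matrix_vector_mult_scaleR)
    also have "\<dots> = S *v b"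
      by (metis c(2) eig[OF b])
    finally show "(R ** R) *v b = S *v b" .
  qed (simp_all add: span)
  then have "R ** R = S"
    by (simp add: matrix_eq)
  with R show ?thesis
    by (rule that)
qed

lemma pos_semidef_mat_sqrt_on_eigenvector:
  fixes R :: "real^'n^'n"
  assumes R: "pos_semidef_mat R" and b: "(R ** R) *v b = m\<^sup>2 *\<^sub>R b" and m: "m \<ge> 0"
  shows "R *v b = m *\<^sub>R b"
proof -
  define w where "w = R *v b - m *\<^sub>R b"
  have "R *v w = (R ** R) *v b - m *\<^sub>R (R *v b)"
    by (simp add: w_def matrix_vector_mult_diff_distrib matrix_vector_mult_scaleR
        matrix_vector_mul_assoc)
  also have "\<dots> = (- m) *\<^sub>R w"
    using b by (simp add: w_def power2_eq_square algebra_simps)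
  finally have "w \<bullet> (R *v w) = - m * (w \<bullet> w)"
    by simp
  moreover have "0 \<le> w \<bullet> (R *v w)"
    using R by (simp add: pos_semidef_mat_def)
  ultimately have "m * (w \<bullet> w) \<le> 0"
    by simp
  moreover have "0 \<le> m * (w \<bullet> w)"
    using m by simp
  ultimately have "m * (w \<bullet> w) = 0"
    by (rule order_antisym)
  then have "m = 0 \<or> w = 0"
    by simp
  then show ?thesis
  proof
    assume "m = 0"
    have "(R *v b) \<bullet> (R *v b) = b \<bullet> ((R ** R) *v b)"
      using R sym_mat_inner[of R b "R *v b"]
      by (simp add: pos_semidef_mat_def matrix_vector_mul_assoc)
    then show ?thesis
      using b \<open>m = 0\<close> by simp
  qed (simp add: w_def)
qed

lemma pos_semidef_mat_sqrt_unique: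
  fixes R1 R2 :: "real^'n^'n"
  assumes R1: "pos_semidef_mat R1" and R2: "pos_semidef_mat R2" and eq: "R1 ** R1 = R2 ** R2"
  shows "R1 = R2"
proof -
  have S: "pos_semidef_mat (R1 ** R1)"
    using R1 by (intro pos_semidef_mat_mult_self) (simp add: pos_semidef_mat_def)
  obtain B where eig: "\<And>b. b \<in> B \<Longrightarrow> (R1 ** R1) *v b = (b \<bullet> ((R1 ** R1) *v b)) *\<^sub>R b"
    and span: "span B = UNIV"
    using sym_mat_orthonormal_eigenbasis S unfolding pos_semidef_mat_def by metis
  have on_basis: "R1 *v b = R2 *v b" if "b \<in> B" for b
  proof -
    define m where "m = sqrt (b \<bullet> ((R1 ** R1) *v b))"
    have m2: "m\<^sup>2 = b \<bullet> ((R1 ** R1) *v b)"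
      using S by (simp add: m_def pos_semidef_mat_def)
    have m0: "m \<ge> 0"
      using S by (simp add: m_def pos_semidef_mat_def)
    have mb: "(R1 ** R1) *v b = m\<^sup>2 *\<^sub>R b"
      unfolding m2 by (rule eig[OF that])
    show ?thesis
      using pos_semidef_mat_sqrt_on_eigenvector[OF R1 mb m0]
        pos_semidef_mat_sqrt_on_eigenvector[OF R2 mb[unfolded eq] m0] by simp
  qed
  have "R1 *v x = R2 *v x" for x
    by (rule linear_eq_on_span[of "(*v) R1" "(*v) R2" B]) (simp_all add: span on_basis)
  then show ?thesis
    by (simp add: matrix_eq)
qed

lemma mat_sqrt_is_sqrt:
  assumes "pos_semidef_mat S"
  shows "pos_semidef_mat (mat_sqrt S)" "mat_sqrt S ** mat_sqrt S = S"
proof -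
  have "\<exists>!R. pos_semidef_mat R \<and> R ** R = S"
    using pos_semidef_mat_sqrt_exists[OF assms] pos_semidef_mat_sqrt_unique by metis
  then have "pos_semidef_mat (mat_sqrt S) \<and> mat_sqrt S ** mat_sqrt S = S"
    unfolding mat_sqrt_def by (rule theI')
  then show "pos_semidef_mat (mat_sqrt S)" "mat_sqrt S ** mat_sqrt S = S"
    by auto
qed

lemma mat_sqrt_eqI:
  assumes "pos_semidef_mat R" "R ** R = S"
  shows "mat_sqrt S = R"
  unfolding mat_sqrt_def
  by (rule the_equality) (use assms pos_semidef_mat_sqrt_unique in auto)

section \<open>Whitening by the square root of a positive definite matrix\<close>

lemma pos_def_mat_imp_pos_semidef_mat: "pos_def_mat S \<Longrightarrow> pos_semidef_mat S"
  unfolding pos_def_mat_def pos_semidef_mat_def by (metis inner_zero_left less_le order_refl)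

lemma pos_def_mat_kernel: "pos_def_mat S \<Longrightarrow> S *v x = 0 \<Longrightarrow> x = 0"
  unfolding pos_def_mat_def by force

lemma invertible_iff_kernel:
  "invertible (A::real^'n^'n) \<longleftrightarrow> (\<forall>x. A *v x = 0 \<longrightarrow> x = 0)"
  by (simp add: invertible_left_inverse matrix_left_invertible_ker)

lemma matrix_inv_inverse:
  assumes "invertible (A::real^'n^'n)"
  shows "A ** matrix_inv A = mat 1" "matrix_inv A ** A = mat 1"
  using someI_ex[OF assms[unfolded invertible_def]] by (auto simp: matrix_inv_def)

lemma invertible_mat_sqrt:
  assumes S: "pos_def_mat S"
  shows "invertible (mat_sqrt S)"
  unfolding invertible_iff_kernel
proof (intro allI impI)
  fix x assume "mat_sqrt S *v x = 0"
  then have "S *v x = 0"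
    using mat_sqrt_is_sqrt(2)[OF pos_def_mat_imp_pos_semidef_mat[OF S]]
    by (metis matrix_vector_mul_assoc matrix_vector_mult_0_right)
  then show "x = 0"
    by (rule pos_def_mat_kernel[OF S])
qed

lemma sym_mat_matrix_inv:
  assumes "sym_mat A" "invertible A"
  shows "sym_mat (matrix_inv A)"
proof -
  have "transpose (matrix_inv A) ** A = mat 1"
    using matrix_inv_inverse(1)[OF assms(2)] assms(1)
    by (metis matrix_transpose_mul sym_mat_def transpose_mat)
  then have "transpose (matrix_inv A) = transpose (matrix_inv A) ** (A ** matrix_inv A)"
    by (simp add: matrix_inv_inverse(1)[OF assms(2)])
  also have "\<dots> = matrix_inv A"
    by (simp add: matrix_mul_assoc \<open>transpose (matrix_inv A) ** A = mat 1\<close>)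
  finally show ?thesis
    by (simp add: sym_mat_def)
qed

lemma quadratic_form_matrix_inv:
  assumes S: "pos_def_mat S"
  shows "x \<bullet> (matrix_inv S *v x) = norm (matrix_inv (mat_sqrt S) *v x) ^ 2"
proof -
  define R where "R = mat_sqrt S"
  define K where "K = matrix_inv R"
  have R: "pos_semidef_mat R" "R ** R = S" "invertible R"
    using mat_sqrt_is_sqrt[OF pos_def_mat_imp_pos_semidef_mat[OF S]] invertible_mat_sqrt[OF S]
    by (simp_all add: R_def)
  have K: "K ** R = mat 1" "R ** K = mat 1" "sym_mat K"
    using matrix_inv_inverse[OF R(3)] sym_mat_matrix_inv[OF _ R(3)] R(1)
    by (simp_all add: K_def pos_semidef_mat_def)
  have "matrix_inv S = (K ** K ** S) ** matrix_inv S"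
    by (metis K(1) R(2) matrix_mul_assoc matrix_mul_lid)
  also have "\<dots> = K ** K"
    using matrix_inv_inverse(1)[OF invertible_mult[OF R(3) R(3)]]
    by (metis R(2) matrix_mul_assoc matrix_mul_rid)
  finally have "x \<bullet> (matrix_inv S *v x) = (K *v x) \<bullet> (K *v x)"
    using K(3) by (simp add: matrix_vector_mul_assoc[symmetric] sym_mat_inner)
  then show ?thesis
    by (simp add: K_def R_def power2_norm_eq_inner)
qed

lemma norm_mat_sqrt_vector_le:
  assumes S: "pos_semidef_mat S"
  shows "norm (mat_sqrt S *v z) \<le> sqrt (op_norm S) * norm z"
proof -
  have nS: "0 \<le> op_norm S"
    unfolding op_norm_def by (rule onorm_pos_le[OF matrix_vector_mul_bounded_linear])
  have Sz: "norm (S *v z) \<le> op_norm S * norm z"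
    unfolding op_norm_def by (rule onorm[OF matrix_vector_mul_bounded_linear])
  have R: "sym_mat (mat_sqrt S)" "mat_sqrt S ** mat_sqrt S = S"
    using mat_sqrt_is_sqrt[OF S] by (simp_all add: pos_semidef_mat_def)
  have "norm (mat_sqrt S *v z) ^ 2 = (mat_sqrt S *v z) \<bullet> (mat_sqrt S *v z)"
    by (simp add: power2_norm_eq_inner)
  also have "\<dots> = z \<bullet> (mat_sqrt S *v (mat_sqrt S *v z))"
    by (rule sym_mat_inner[OF R(1)])
  also have "\<dots> = z \<bullet> (S *v z)"
    by (simp only: matrix_vector_mul_assoc R(2))
  also have "\<dots> \<le> norm z * norm (S *v z)"
    by (rule norm_cauchy_schwarz)
  also have "\<dots> \<le> norm z * (op_norm S * norm z)"
    using Sz by (rule mult_left_mono) simp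
  also have "\<dots> = (sqrt (op_norm S) * norm z) ^ 2"
    using nS by (simp add: power_mult_distrib power2_eq_square)
  finally show ?thesis
    by (rule power2_le_imp_le) (simp add: nS)
qed

lemma op_norm_pos:
  assumes "pos_def_mat (S::real^'n^'n)"
  shows "op_norm S > 0"
proof -
  have "S *v axis undefined 1 \<noteq> 0"
    using pos_def_mat_kernel[OF assms] by (metis axis_eq_0_iff zero_neq_one)
  then have "0 < norm (S *v axis undefined 1)"
    by simp
  also have "\<dots> \<le> op_norm S * norm (axis undefined (1::real) :: real^'n)"
    unfolding op_norm_def by (rule onorm[OF matrix_vector_mul_bounded_linear])
  finally show ?thesis
    by (simp add: norm_axis_1)
qed

lemma norm_le_quadratic_form_matrix_inv:
  assumes S: "pos_def_mat S"
  shows "norm x ^ 2 \<le> op_norm S * (x \<bullet> (matrix_inv S *v x))"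
proof -
  define K where "K = matrix_inv (mat_sqrt S)"
  have "x = mat_sqrt S *v (K *v x)"
    using matrix_inv_inverse(1)[OF invertible_mat_sqrt[OF S]]
    by (simp add: K_def matrix_vector_mul_assoc)
  then have "norm x \<le> sqrt (op_norm S) * norm (K *v x)"
    by (metis norm_mat_sqrt_vector_le pos_def_mat_imp_pos_semidef_mat[OF S])
  then have "norm x ^ 2 \<le> (sqrt (op_norm S) * norm (K *v x)) ^ 2"
    by (rule power_mono) simp
  then show ?thesis
    using op_norm_pos[OF S] quadratic_form_matrix_inv[OF S, of x]
    by (simp add: K_def power_mult_distrib)
qed

lemma quadratic_forms_le_whitened:
  fixes Sig B :: "real^'n^'n"
  assumes Sig: "pos_def_mat Sig"
    and C: "\<And>z. norm ((mat_sqrt Sig ** B ** mat_sqrt Sig) *v z) \<le> c * norm z"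
  shows "x \<bullet> (B *v x) \<le> c * (x \<bullet> (matrix_inv Sig *v x))"
    and "x \<bullet> ((B ** Sig ** transpose B) *v x) \<le> c\<^sup>2 * (x \<bullet> (matrix_inv Sig *v x))"
proof -
  define R where "R = mat_sqrt Sig"
  define C where "C = R ** B ** R"
  define y where "y = matrix_inv R *v x"
  have R: "sym_mat R" "R ** R = Sig"
    using mat_sqrt_is_sqrt[OF pos_def_mat_imp_pos_semidef_mat[OF Sig]]
    by (simp_all add: R_def pos_semidef_mat_def)
  have x: "x = R *v y"
    using matrix_inv_inverse(1)[OF invertible_mat_sqrt[OF Sig]]
    by (simp add: y_def R_def matrix_vector_mul_assoc)
  have Q: "x \<bullet> (matrix_inv Sig *v x) = norm y ^ 2"
    by (simp add: quadratic_form_matrix_inv[OF Sig] y_def R_def)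
  have "x \<bullet> (B *v x) = y \<bullet> (C *v y)"
    unfolding x C_def using sym_mat_inner[OF R(1), of y "B *v (R *v y)"]
    by (simp add: matrix_vector_mul_assoc[symmetric])
  also have "\<dots> \<le> norm y * (c * norm y)"
    using norm_cauchy_schwarz C[of y] by (smt (verit) C_def R_def mult_left_mono norm_ge_zero)
  finally show "x \<bullet> (B *v x) \<le> c * (x \<bullet> (matrix_inv Sig *v x))"
    by (simp add: Q power2_eq_square mult_ac)
  have "transpose C = R ** transpose B ** R"
    using R(1) by (simp add: C_def matrix_transpose_mul matrix_mul_assoc sym_mat_def)
  then have "x \<bullet> ((B ** Sig ** transpose B) *v x) = norm (transpose C *v y) ^ 2"
    unfolding x R(2)[symmetric] using sym_mat_inner[OF R(1)]
    by (simp add: power2_norm_eq_inner matrix_vector_mul_assoc[symmetric]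
        inner_matrix_vector_transpose)
  also have "\<dots> \<le> (c * norm y) ^ 2"
    using norm_transpose_matrix_vector_le[of C c y] C by (simp add: C_def R_def power_mono)
  finally show "x \<bullet> ((B ** Sig ** transpose B) *v x) \<le> c\<^sup>2 * (x \<bullet> (matrix_inv Sig *v x))"
    by (simp add: Q power_mult_distrib)
qed

section \<open>Exponential moments of Gaussian vectors\<close>

lemma gaussian_nn_integral_finite:
  assumes "(e::real) > 0"
  shows "(\<integral>\<^sup>+t. ennreal (exp (- e * t\<^sup>2)) \<partial>lborel) < \<infinity>"
proof -
  define s where "s = sqrt (1 / (2 * e))"
  have s: "s > 0" "2 * s\<^sup>2 = 1 / e"
    using assms by (auto simp: s_def)
  have "normal_density 0 s t = exp (- e * t\<^sup>2) / sqrt (2 * pi * s\<^sup>2)" for t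
    by (simp add: normal_density_def s(2))
  then have "exp (- e * t\<^sup>2) = sqrt (2 * pi * s\<^sup>2) * normal_density 0 s t" for t
    using s(1) by simp
  moreover have "integrable lborel (\<lambda>t. sqrt (2 * pi * s\<^sup>2) * normal_density 0 s t)"
    by (intro integrable_mult_right integrable_normal_density) (simp add: s(1))
  ultimately have "integrable lborel (\<lambda>t. exp (- e * t\<^sup>2))"
    by simp
  then show ?thesis
    by (simp add: integrable_iff_bounded)
qed

lemma gaussian_nn_integral_finite_euclidean:
  assumes "(e::real) > 0"
  shows "(\<integral>\<^sup>+x. ennreal (exp (- e * norm x ^ 2)) \<partial>(lborel::'a::euclidean_space measure)) < \<infinity>"
proof -
  have "norm x ^ 2 = (\<Sum>b\<in>Basis. (x \<bullet> b)\<^sup>2)" for x :: 'a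
    using euclidean_inner[of x x] by (simp add: power2_norm_eq_inner[symmetric] power2_eq_square)
  then have "(\<integral>\<^sup>+x. ennreal (exp (- e * norm x ^ 2)) \<partial>(lborel::'a measure))
      = (\<integral>\<^sup>+x. (\<Prod>b\<in>Basis. (\<lambda>t. ennreal (exp (- e * t\<^sup>2))) (x \<bullet> b)) \<partial>(lborel::'a measure))"
    by (simp add: prod_ennreal exp_sum[symmetric] sum_distrib_left sum_negf)
  also have "\<dots> = (\<Prod>b\<in>(Basis::'a set). \<integral>\<^sup>+t. ennreal (exp (- e * t\<^sup>2)) \<partial>lborel)"
    by (rule nn_integral_lborel_prod) simp_all
  also have "\<dots> < \<infinity>"
    using gaussian_nn_integral_finite[OF assms] by (simp add: less_top[symmetric] power_eq_top_ennreal)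
  finally show ?thesis .
qed

lemma mvn_exp_moment_finite:
  fixes Sig :: "real^'d^'d" and X :: "'w \<Rightarrow> real^'d"
  assumes X: "distributed \<Omega> lborel X (\<lambda>x. ennreal (mvn_density Sig x))"
    and g: "g \<in> borel_measurable borel" and \<eta>: "\<eta> > 0"
    and bound: "\<And>x. g x - (x \<bullet> (matrix_inv Sig *v x)) / 2 \<le> - \<eta> * norm x ^ 2"
  shows "(\<integral>\<^sup>+\<omega>. ennreal (exp (g (X \<omega>))) \<partial>\<Omega>) < \<infinity>"
proof -
  \<comment> \<open>the absolute value because \<open>det Sig\<close> need not be positive here\<close>
  define k where "k = \<bar>1 / sqrt ((2 * pi) ^ CARD('d) * det Sig)\<bar>"
  have "mvn_density Sig x * exp (g x) \<le> k * exp (- \<eta> * norm x ^ 2)" for x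
  proof -
    have "exp (g x - (x \<bullet> (matrix_inv Sig *v x)) / 2) = exp (- (x \<bullet> (matrix_inv Sig *v x)) / 2) * exp (g x)"
      by (simp add: exp_add[symmetric])
    then have "mvn_density Sig x * exp (g x)
        = 1 / sqrt ((2 * pi) ^ CARD('d) * det Sig) * exp (g x - (x \<bullet> (matrix_inv Sig *v x)) / 2)"
      by (simp add: mvn_density_def)
    also have "\<dots> \<le> k * exp (- \<eta> * norm x ^ 2)"
      unfolding k_def using bound[of x] by (intro mult_mono abs_ge_self) auto
    finally show ?thesis .
  qed
  then have pointwise: "ennreal (mvn_density Sig x) * ennreal (exp (g x))
      \<le> ennreal k * ennreal (exp (- \<eta> * norm x ^ 2))" for x
    by (simp add: ennreal_mult''[symmetric] ennreal_leI)
  have "(\<lambda>x. ennreal (exp (g x))) \<in> borel_measurable lborel"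
    using g by measurable
  then have "(\<integral>\<^sup>+\<omega>. ennreal (exp (g (X \<omega>))) \<partial>\<Omega>)
      = (\<integral>\<^sup>+x. ennreal (mvn_density Sig x) * ennreal (exp (g x)) \<partial>lborel)"
    by (simp add: distributed_nn_integral[OF X])
  also have "\<dots> \<le> (\<integral>\<^sup>+x. ennreal k * ennreal (exp (- \<eta> * norm (x::real^'d) ^ 2)) \<partial>lborel)"
    by (rule nn_integral_mono) (rule pointwise)
  also have "\<dots> = ennreal k * (\<integral>\<^sup>+x. ennreal (exp (- \<eta> * norm (x::real^'d) ^ 2)) \<partial>lborel)"
    by (rule nn_integral_cmult) measurable
  also have "\<dots> < \<infinity>"
    using gaussian_nn_integral_finite_euclidean[OF \<eta>, where 'a="real^'d"]
    by (simp add: ennreal_mult_less_top)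
  finally show ?thesis .
qed

lemma mvn_exp_quadratic_moment_finite:
  fixes Sig :: "real^'d^'d" and X :: "'w \<Rightarrow> real^'d"
  assumes Sig: "pos_def_mat Sig" and X: "distributed \<Omega> lborel X (\<lambda>x. ennreal (mvn_density Sig x))"
    and g: "g \<in> borel_measurable borel" and a: "a < 1/2"
    and bound: "\<And>x. g x \<le> a * (x \<bullet> (matrix_inv Sig *v x))"
  shows "(\<integral>\<^sup>+\<omega>. ennreal (exp (g (X \<omega>))) \<partial>\<Omega>) < \<infinity>"
proof (rule mvn_exp_moment_finite[OF X g])
  show "(1/2 - a) / op_norm Sig > 0"
    using a op_norm_pos[OF Sig] by simp
  fix x
  have "g x - (x \<bullet> (matrix_inv Sig *v x)) / 2 \<le> - (1/2 - a) * (x \<bullet> (matrix_inv Sig *v x))"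
    using bound[of x] by (simp add: algebra_simps)
  also have "\<dots> \<le> - ((1/2 - a) / op_norm Sig) * norm x ^ 2"
  proof -
    have "((1/2 - a) / op_norm Sig) * norm x ^ 2
        \<le> ((1/2 - a) / op_norm Sig) * (op_norm Sig * (x \<bullet> (matrix_inv Sig *v x)))"
      using a op_norm_pos[OF Sig]
      by (intro mult_left_mono[OF norm_le_quadratic_form_matrix_inv[OF Sig]]) simp
    also have "\<dots> = (1/2 - a) * (x \<bullet> (matrix_inv Sig *v x))"
      using op_norm_pos[OF Sig] by simp
    finally show ?thesis
      by linarith
  qed
  finally show "g x - (x \<bullet> (matrix_inv Sig *v x)) / 2 \<le> - ((1/2 - a) / op_norm Sig) * norm x ^ 2" .
qed

lemma mvn_exp_whitened_moments_finite:
  fixes Sig B :: "real^'d^'d" and X :: "'w \<Rightarrow> real^'d"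
  assumes Sig: "pos_def_mat Sig" and X: "distributed \<Omega> lborel X (\<lambda>x. ennreal (mvn_density Sig x))"
    and C: "\<And>z. norm ((mat_sqrt Sig ** B ** mat_sqrt Sig) *v z) \<le> c * norm z"
    and c: "0 \<le> c" "c < 1/16"
  shows "(\<integral>\<^sup>+\<omega>. ennreal (exp (8 * (X \<omega> \<bullet> (B *v X \<omega>)))) \<partial>\<Omega>) < \<infinity>"
    and "(\<integral>\<^sup>+\<omega>. ennreal (exp (16 * (X \<omega> \<bullet> ((B ** Sig ** transpose B) *v X \<omega>)))) \<partial>\<Omega>) < \<infinity>"
proof -
  have "c\<^sup>2 \<le> c * (1/16)"
    using c unfolding power2_eq_square by (intro mult_left_mono) simp_all
  then have c2: "16 * c\<^sup>2 < 1/2"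
    using c by linarith
  show "(\<integral>\<^sup>+\<omega>. ennreal (exp (8 * (X \<omega> \<bullet> (B *v X \<omega>)))) \<partial>\<Omega>) < \<infinity>"
  proof (rule mvn_exp_quadratic_moment_finite[OF Sig X, where g = "\<lambda>x. 8 * (x \<bullet> (B *v x))"])
    show "(\<lambda>x. 8 * (x \<bullet> (B *v x))) \<in> borel_measurable borel"
      by (intro borel_measurable_continuous_onI continuous_intros)
    show "8 * (x \<bullet> (B *v x)) \<le> (8 * c) * (x \<bullet> (matrix_inv Sig *v x))" for x
      using quadratic_forms_le_whitened(1)[OF Sig C, of x] by simp
  qed (use c in simp)
  show "(\<integral>\<^sup>+\<omega>. ennreal (exp (16 * (X \<omega> \<bullet> ((B ** Sig ** transpose B) *v X \<omega>)))) \<partial>\<Omega>) < \<infinity>"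
  proof (rule mvn_exp_quadratic_moment_finite[OF Sig X,
        where g = "\<lambda>x. 16 * (x \<bullet> ((B ** Sig ** transpose B) *v x))"])
    show "(\<lambda>x. 16 * (x \<bullet> ((B ** Sig ** transpose B) *v x))) \<in> borel_measurable borel"
      by (intro borel_measurable_continuous_onI continuous_intros)
    show "16 * (x \<bullet> ((B ** Sig ** transpose B) *v x)) \<le> (16 * c\<^sup>2) * (x \<bullet> (matrix_inv Sig *v x))" for x
      using quadratic_forms_le_whitened(2)[OF Sig C, of x] by simp
  qed (rule c2)
qed

definition diag_mat :: "real^'n \<Rightarrow> real^'n^'n" where
  "diag_mat d = (\<chi> i j. if i = j then d $ i else 0)"

lemma diag_mat_vector: "diag_mat d *v w = (\<chi> i. d $ i * w $ i)"
proof -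
  have "(\<Sum>j\<in>UNIV. (if i = j then d $ i else 0) * w $ j) = d $ i * w $ i" for i
    by (simp add: if_distrib[of "\<lambda>a. a * _"] cong: if_cong)
  then show ?thesis
    by (simp add: diag_mat_def matrix_vector_mult_def vec_eq_iff)
qed

lemma diag_mat_diag: "(\<forall>i j. i \<noteq> j \<longrightarrow> D $ i $ j = 0) \<Longrightarrow> D = diag_mat (\<chi> i. D $ i $ i)"
  by (auto simp: diag_mat_def vec_eq_iff)

lemma transpose_diag_mat: "transpose (diag_mat d) = diag_mat d"
  by (auto simp: diag_mat_def transpose_def vec_eq_iff)

lemma mat_sqrt_diag_mat:
  fixes d :: "real^'n"
  assumes "\<forall>i. d $ i \<ge> 0"
  shows "mat_sqrt (diag_mat d) = diag_mat (\<chi> i. sqrt (d $ i))"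
proof (rule mat_sqrt_eqI)
  show "pos_semidef_mat (diag_mat (\<chi> i. sqrt (d $ i)))"
    unfolding pos_semidef_mat_def sym_mat_def transpose_diag_mat
  proof (intro conjI allI)
    fix x :: "real^'n"
    have "0 \<le> x $ i * (sqrt (d $ i) * x $ i)" for i
      using assms by (simp add: mult.left_commute[of "x $ i"])
    then show "0 \<le> x \<bullet> (diag_mat (\<chi> i. sqrt (d $ i)) *v x)"
      by (simp add: diag_mat_vector inner_vec_def sum_nonneg)
  qed simp
  show "diag_mat (\<chi> i. sqrt (d $ i)) ** diag_mat (\<chi> i. sqrt (d $ i)) = diag_mat d"
    using assms by (simp add: matrix_eq matrix_vector_mul_assoc[symmetric] diag_mat_vector
        vec_eq_iff mult.assoc[symmetric])
qed

lemma norm_diag_mat_vector_le: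
  assumes "\<And>i. \<bar>d $ i\<bar> \<le> c"
  shows "norm (diag_mat d *v w) \<le> c * norm w"
proof -
  have c: "0 \<le> c"
    using assms[of undefined] by linarith
  have "norm (diag_mat d *v w) = L2_set (\<lambda>i. \<bar>d $ i\<bar> * \<bar>w $ i\<bar>) UNIV"
    by (simp add: norm_vec_def diag_mat_vector abs_mult)
  also have "\<dots> \<le> L2_set (\<lambda>i. c * \<bar>w $ i\<bar>) UNIV"
    by (intro L2_set_mono mult_right_mono assms) simp_all
  also have "\<dots> = c * norm w"
    using c by (simp add: norm_vec_def L2_set_right_distrib)
  finally show ?thesis .
qed

lemma singular_values_svd:
  fixes U :: "real^'n^'m" and V :: "real^'n^'n" and d :: "real^'n"
  assumes U: "transpose U ** U = mat 1" and V: "transpose V ** V = mat 1" and d: "\<forall>i. d $ i \<ge> 0"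
  shows "singular_values (U ** diag_mat d ** transpose V) = range (($) d)"
proof -
  define T where "T = U ** diag_mat d ** transpose V"
  have VVt: "V ** transpose V = mat 1"
    using V by (simp add: matrix_left_right_inverse)
  have VtV: "transpose V *v (V *v w) = w" for w
    by (simp add: matrix_vector_mul_assoc V)
  have TT: "(transpose T ** T) *v v = V *v (diag_mat (\<chi> i. (d $ i)\<^sup>2) *v (transpose V *v v))" for v
  proof -
    have "transpose T ** T = V ** diag_mat d ** (transpose U ** U) ** diag_mat d ** transpose V"
      by (simp add: T_def matrix_transpose_mul transpose_diag_mat matrix_mul_assoc)
    then show ?thesis
      by (simp add: U matrix_vector_mul_assoc[symmetric] diag_mat_vector power2_eq_square
          mult.assoc)
  qed
  have "t = d $ i" if t: "t \<ge> 0" and v: "v \<noteq> 0" "(transpose T ** T) *v v = t\<^sup>2 *\<^sub>R v"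
    and i: "(transpose V *v v) $ i \<noteq> 0" for t v i
  proof -
    have "diag_mat (\<chi> i. (d $ i)\<^sup>2) *v (transpose V *v v) = t\<^sup>2 *\<^sub>R (transpose V *v v)"
      using arg_cong[OF v(2)[unfolded TT], of "(*v) (transpose V)"]
      by (simp add: VtV matrix_vector_mult_scaleR)
    then have "(d $ i)\<^sup>2 = t\<^sup>2"
      using i by (auto simp: diag_mat_vector vec_eq_iff)
    then show ?thesis
      using t d by (simp add: power2_eq_iff_nonneg)
  qed
  moreover have "\<exists>i. (transpose V *v v) $ i \<noteq> 0" if "v \<noteq> 0" for v
    using that VVt by (metis matrix_vector_mul_assoc matrix_vector_mul_lid matrix_vector_mult_0_right vec_eq_iff zero_index)
  moreover have "d $ i \<in> singular_values T" for i
  proof -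
    have "transpose V *v (V *v axis i 1) = axis i 1"
      by (rule VtV)
    moreover have "diag_mat (\<chi> i. (d $ i)\<^sup>2) *v axis i 1 = (d $ i)\<^sup>2 *\<^sub>R axis i (1::real)"
      by (simp add: diag_mat_vector vec_eq_iff axis_def)
    ultimately have "(transpose T ** T) *v (V *v axis i 1) = (d $ i)\<^sup>2 *\<^sub>R (V *v axis i 1)"
      by (simp add: TT matrix_vector_mult_scaleR)
    moreover have "V *v axis i 1 \<noteq> 0"
      using \<open>transpose V *v (V *v axis i 1) = axis i 1\<close> by (metis axis_eq_0_iff matrix_vector_mult_0_right zero_neq_one)
    ultimately show ?thesis
      using d by (auto simp: singular_values_def)
  qed
  ultimately show ?thesis
    unfolding T_def[symmetric] singular_values_def by blast
qed

lemma diag_le_sigma1_svd: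
  fixes U :: "real^'n^'m" and V :: "real^'n^'n" and d :: "real^'n"
  assumes "transpose U ** U = mat 1" "transpose V ** V = mat 1" "\<forall>i. d $ i \<ge> 0"
  shows "d $ i \<le> sigma1 (U ** diag_mat d ** transpose V)"
  unfolding sigma1_def singular_values_svd[OF assms] by (rule Max_ge) simp_all

lemma norm_mat_sqrt_diag_svd_le:
  fixes U :: "real^'n^'m" and V Gam :: "real^'n^'n"
  assumes U: "transpose U ** U = mat 1" and V: "transpose V ** V = mat 1"
    and diag: "\<forall>i j. i \<noteq> j \<longrightarrow> Gam $ i $ j = 0" and nonneg: "\<forall>i. Gam $ i $ i \<ge> 0"
  shows "norm (mat_sqrt Gam *v w) \<le> sqrt (sigma1 (U ** Gam ** transpose V)) * norm w"
proof -
  define d where "d = (\<chi> i. Gam $ i $ i)"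
  have Gam: "Gam = diag_mat d" and d: "\<forall>i. d $ i \<ge> 0"
    using diag_mat_diag[OF diag] nonneg by (simp_all add: d_def)
  have "\<bar>sqrt (d $ i)\<bar> \<le> sqrt (sigma1 (U ** Gam ** transpose V))" for i
    using diag_le_sigma1_svd[OF U V d, of i] d by (simp add: Gam)
  then show ?thesis
    unfolding Gam mat_sqrt_diag_mat[OF d] by (intro norm_diag_mat_vector_le) simp
qed

section \<open>Parameters close to the solution set\<close>

lemma P_norm_eq:
  assumes "pos_semidef_mat Sig"
  shows "P_norm Sig A B = sqrt (norm A ^ 2 + norm (mat_sqrt Sig ** B) ^ 2)"
proof -
  have R: "transpose (mat_sqrt Sig) = mat_sqrt Sig" "mat_sqrt Sig ** mat_sqrt Sig = Sig"
    using mat_sqrt_is_sqrt[OF assms] by (simp_all add: pos_semidef_mat_def sym_mat_def)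
  have "transpose (mat_sqrt Sig ** B) ** (mat_sqrt Sig ** B)
      = transpose B ** (mat_sqrt Sig ** mat_sqrt Sig) ** B"
    by (simp add: matrix_transpose_mul R(1) matrix_mul_assoc)
  then have "transpose B ** Sig ** B = transpose (mat_sqrt Sig ** B) ** (mat_sqrt Sig ** B)"
    by (simp add: R(2))
  then show ?thesis
    by (simp add: P_norm_def trace_transpose_mult_self)
qed

lemma P_dist_lessE:
  assumes Sig: "pos_semidef_mat Sig" and S: "S \<noteq> {}" and less: "P_dist Sig A B S < r"
  obtains A' B' where "(A', B') \<in> S" "norm (mat_sqrt Sig ** (B - B')) < r"
proof -
  have "bdd_below ((\<lambda>s. P_norm Sig (A - fst s) (B - snd s)) ` S)"
    by (rule bdd_belowI2[where m = 0]) (simp add: P_norm_eq[OF Sig])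
  then obtain s where "s \<in> S" "P_norm Sig (A - fst s) (B - snd s) < r"
    using less S by (auto simp: P_dist_def cINF_less_iff)
  moreover have "norm (mat_sqrt Sig ** (B - snd s)) \<le> P_norm Sig (A - fst s) (B - snd s)"
    by (simp add: P_norm_eq[OF Sig] real_le_rsqrt)
  ultimately show ?thesis
    using that[of "fst s" "snd s"] by simp
qed

lemma whitened_perturbation_bound:
  fixes R K V G J D :: "real^'n^'n"
  assumes RK: "R ** K = mat 1" "K ** R = mat 1"
    and V: "orthogonal_matrix V" and J: "orthogonal_matrix J"
    and G: "\<And>w. norm (G *v w) \<le> s * norm w" and R: "\<And>z. norm (R *v z) \<le> r * norm z"
  shows "norm ((R ** (K ** V ** G ** transpose J ** K + D) ** R) *v z) \<le> (s + norm (R ** D) * r) * norm z"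
proof -
  have RKv: "R *v (K *v w) = w" "K *v (R *v w) = w" for w
    by (simp_all add: matrix_vector_mul_assoc RK)
  have "(R ** (K ** V ** G ** transpose J ** K + D) ** R) *v z
      = V *v (G *v (transpose J *v z)) + (R ** D) *v (R *v z)"
    by (simp add: matrix_vector_mul_assoc[symmetric] matrix_vector_mult_add_rdistrib
        matrix_vector_right_distrib RKv)
  also have "norm \<dots> \<le> norm (V *v (G *v (transpose J *v z))) + norm ((R ** D) *v (R *v z))"
    by (rule norm_triangle_ineq)
  also have "\<dots> \<le> s * norm z + norm (R ** D) * (r * norm z)"
  proof (rule add_mono)
    show "norm (V *v (G *v (transpose J *v z))) \<le> s * norm z"
      using G[of "transpose J *v z"] V J
      by (simp add: norm_orthogonal_matrix_vector orthogonal_matrix_transpose)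
    show "norm ((R ** D) *v (R *v z)) \<le> norm (R ** D) * (r * norm z)"
      using norm_matrix_vector_le[of "R ** D" "R *v z"] R[of z]
      by (meson mult_left_mono norm_ge_zero order_trans)
  qed
  finally show ?thesis
    by (simp add: algebra_simps)
qed

lemma whitened_norm_le_near_sol_set:
  fixes Sig Gam V :: "real^'d^'d" and U :: "real^'d^'p"
  assumes Sig: "pos_def_mat Sig" and V: "orthogonal_matrix V"
    and G: "\<And>w. norm (mat_sqrt Gam *v w) \<le> s * norm w"
    and near: "P_dist Sig A B (sol_set Sig U Gam V) < r"
  shows "norm ((mat_sqrt Sig ** B ** mat_sqrt Sig) *v z) \<le> (s + r * sqrt (op_norm Sig)) * norm z"
proof -
  define R where "R = mat_sqrt Sig"
  define K where "K = matrix_inv R"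
  have RK: "R ** K = mat 1" "K ** R = mat 1"
    using matrix_inv_inverse[OF invertible_mat_sqrt[OF Sig]] by (simp_all add: R_def K_def)
  have "sol_set Sig U Gam V \<noteq> {}"
    using orthogonal_matrix_id by (auto simp: sol_set_def)
  then obtain A' B' where "(A', B') \<in> sol_set Sig U Gam V" and B': "norm (R ** (B - B')) < r"
    using P_dist_lessE[OF pos_def_mat_imp_pos_semidef_mat[OF Sig] _ near] by (metis R_def)
  then obtain J where J: "orthogonal_matrix J" and "B' = K ** V ** mat_sqrt Gam ** transpose J ** K"
    by (auto simp: sol_set_def R_def K_def)
  then have "norm ((R ** B ** R) *v z) \<le> (s + norm (R ** (B - B')) * sqrt (op_norm Sig)) * norm z"
    using whitened_perturbation_bound[OF RK V J G
        norm_mat_sqrt_vector_le[OF pos_def_mat_imp_pos_semidef_mat[OF Sig], folded R_def], of "B - B'" z]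
    by simp
  also have "\<dots> \<le> (s + r * sqrt (op_norm Sig)) * norm z"
    using B' op_norm_pos[OF Sig] by (intro mult_right_mono add_left_mono) simp_all
  finally show ?thesis
    by (simp add: R_def)
qed

theorem lemma7:
  fixes Sig :: "real^'d^'d" and M :: "real^'d^'p"
    and U :: "real^'d^'p" and Gam :: "real^'d^'d" and V :: "real^'d^'d"
    and A :: "real^'d^'p" and B :: "real^'d^'d"
    and \<Omega> :: "'w measure" and X :: "'w \<Rightarrow> real^'d"
  assumes Sig_pd: "pos_def_mat Sig"
    and pd: "CARD('d) \<le> CARD('p)"
    and full_rank: "rank (M ** mat_sqrt Sig) = CARD('d)"
    and U_orth: "transpose U ** U = mat 1"
    and V_orth: "transpose V ** V = mat 1"
    and Gam_diag: "\<forall>i j. i \<noteq> j \<longrightarrow> Gam $ i $ j = 0"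
    and Gam_pos: "\<forall>i. Gam $ i $ i > 0"
    and svd: "M ** mat_sqrt Sig = U ** Gam ** transpose V"
    and small: "sqrt (sigma1 (M ** mat_sqrt Sig)) < 1/16"
    and close: "P_dist Sig A B (sol_set Sig U Gam V)
                \<le> (1 / (2 * sqrt (op_norm Sig))) * (1/16 - sqrt (sigma1 (M ** mat_sqrt Sig)))"
    and prob: "prob_space \<Omega>"
    and X_gauss: "distributed \<Omega> lborel X (\<lambda>x. ennreal (mvn_density Sig x))"
  shows "(\<integral>\<^sup>+ \<omega>. ennreal (exp (8 * (X \<omega> \<bullet> (B *v X \<omega>)))) \<partial>\<Omega>) < \<infinity>
       \<and> (\<integral>\<^sup>+ \<omega>. ennreal (exp (16 * (X \<omega> \<bullet> ((B ** Sig ** transpose B) *v X \<omega>)))) \<partial>\<Omega>) < \<infinity>"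
proof -
  define s where "s = sqrt (sigma1 (M ** mat_sqrt Sig))"
  define \<epsilon> where "\<epsilon> = (1 / (2 * sqrt (op_norm Sig))) * (1/16 - s)"
  have n: "0 < sqrt (op_norm Sig)"
    using op_norm_pos[OF Sig_pd] by simp
  have G: "norm (mat_sqrt Gam *v w) \<le> s * norm w" for w
    using norm_mat_sqrt_diag_svd_le[OF U_orth V_orth Gam_diag] Gam_pos
    by (simp add: s_def svd less_imp_le)
  have s: "0 \<le> s"
    using G[of "axis undefined 1"] by (simp add: norm_axis_1) (meson norm_ge_zero order_trans)
  have "\<epsilon> > 0" and "P_dist Sig A B (sol_set Sig U Gam V) \<le> \<epsilon>"
    using small close n by (simp_all add: \<epsilon>_def s_def)
  \<comment> \<open>any radius strictly between \<open>\<epsilon>\<close> and \<open>2 \<epsilon>\<close> keeps the resulting constant below \<open>1/16\<close>\<close>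
  then have "P_dist Sig A B (sol_set Sig U Gam V) < 3/2 * \<epsilon>"
    by linarith
  from whitened_norm_le_near_sol_set[OF Sig_pd _ G this] V_orth
  have "norm ((mat_sqrt Sig ** B ** mat_sqrt Sig) *v z) \<le> (s + 3/2 * \<epsilon> * sqrt (op_norm Sig)) * norm z"
    for z by (simp add: orthogonal_matrix)
  also have "s + 3/2 * \<epsilon> * sqrt (op_norm Sig) = 3/64 + s / 4"
    using n by (simp add: \<epsilon>_def field_simps)
  finally have C: "norm ((mat_sqrt Sig ** B ** mat_sqrt Sig) *v z) \<le> (3/64 + s / 4) * norm z" for z .
  have "0 \<le> 3/64 + s / 4" "3/64 + s / 4 < 1/16"
    using s small by (simp_all add: s_def)
  then show ?thesis
    using mvn_exp_whitened_moments_finite[OF Sig_pd X_gauss C] by simp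
qed

end
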